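(* Let $h\in\mathbb{F}[x]$ with $\deg h\ge1$ and $\mathcal{A}=\mathrm{Aut}_{\mathbb{F}}(A_h)$. Then $A_h^{\mathcal{A}}=\mathbb{F}[x]^{\mathcal{A}}$, and: (i) if $\mathcal{A}=\{\phi_f:f\in\mathbb{F}[x]\}$ then $\mathbb{F}[x]^{\mathcal{A}}=\mathbb{F}[x]$; if $\mathcal{A}=\{\phi_f\}\rtimes\tau_{\mathbb{P}}$ with $\tau_{\mathbb{P}}\cong\mathbb{F}^*$ (i.e. $h=\gamma(x-\lambda)^n$ with $\lambda\in\mathbb{F}$) and $\mathbb{F}$ is infinite, then $\mathbb{F}[x]^{\mathcal{A}}=\mathbb{F}$; (ii) $\mathbb{F}[x]^{\mathcal{A}}=\mathbb{F}[t]$ where: (a) if $\tau_{\mathbb{P}}=\tau_{1,\mathbb{G}}$, then $t(x)=\prod_{\nu\in\mathbb{G}}(x+\nu)$; (b) if $\tau_{\mathbb{P}}=\tau_{1,\mathbb{G}}\rtimes\langle\tau_{\alpha,\beta}\rangle$ with $\alpha$ a primitive $\ell$-th root of unity for some $\ell>1$, then $t(x)=\prod_{\nu\in\mathbb{G}}\left(x+\frac{\beta}{\alpha-1}+\nu\right)^{\ell}$.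
   Context: $\mathbb{F}$ is an arbitrary field. For $h\in\mathbb{F}[x]$, $A_h$ is the unital associative $\mathbb{F}$-algebra generated by $x,\hat y$ with defining relation $\hat yx-x\hat y=h$. For a group $\mathcal{A}$ of automorphisms and a subalgebra $S$, $S^{\mathcal{A}}=\{s\in S:\omega(s)=s\ \forall\omega\in\mathcal{A}\}$. Let $\mathbb{P}=\{(\alpha,\beta)\in\mathbb{F}^*\times\mathbb{F}: h(\alpha x+\beta)=\alpha^{\deg h}h(x)\}$; for $(\alpha,\beta)\in\mathbb{P}$, $\tau_{\alpha,\beta}$ is the automorphism of $A_h$ with $x\mapsto\alpha x+\beta$, $\hat y\mapsto\alpha^{\deg h-1}\hat y$; $\tau_{\mathbb{P}}=\{\tau_{\alpha,\beta}\}$. For $f\in\mathbb{F}[x]$, $\phi_f$ is the automorphism with $x\mapsto x$, $\hat y\mapsto\hat y+f$. It is known that $\mathcal{A}=\{\phi_f\}\rtimes\tau_{\mathbb{P}}$. $\mathbb{G}=\{\nu\in\mathbb{F}:(1,\nu)\in\mathbb{P}\}$, a finite additive subgroup, and $\tau_{1,\mathbb{G}}=\{\tau_{1,\nu}:\nu\in\mathbb{G}\}$. *)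

theory Defs
  imports "HOL-Computational_Algebra.Polynomial"
begin

text \<open>Concrete model of A_h = F<x,y> / (yx - xy - h) as the Ore extension F[x][y; delta],
  delta = h d/dx.  An element sum_j p_j(x) y^j (PBW normal form, x-powers on the left)
  is represented by the polynomial in y with coefficients in F[x], i.e. a value of type
  'a poly poly whose j-th coefficient is p_j.\<close>

definition Ah_delta :: "'a::field poly \<Rightarrow> 'a poly \<Rightarrow> 'a poly" where
  "Ah_delta h p = h * pderiv p"

text \<open>Multiplication of A_h, using  y^i b = sum_k (i choose k) delta^k(b) y^(i-k).\<close>
definition Ah_mult :: "'a::field poly \<Rightarrow> 'a poly poly \<Rightarrow> 'a poly poly \<Rightarrow> 'a poly poly" where
  "Ah_mult h A B =
     (\<Sum>i\<le>degree A. \<Sum>j\<le>degree B. \<Sum>k\<le>i.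
        monom (coeff A i * of_nat (i choose k) * ((Ah_delta h ^^ k) (coeff B j))) (i - k + j))"

primrec Ah_pow :: "'a::field poly \<Rightarrow> 'a poly poly \<Rightarrow> nat \<Rightarrow> 'a poly poly" where
  "Ah_pow h A 0 = 1"
| "Ah_pow h A (Suc n) = Ah_mult h A (Ah_pow h A n)"

definition Ah_emb :: "'a::field poly \<Rightarrow> 'a poly poly" where
  "Ah_emb p = [:p:]"

definition Ah_Fx :: "'a::field poly poly set" where
  "Ah_Fx = range Ah_emb"

text \<open>phi_f : x \<mapsto> x, y \<mapsto> y + f.\<close>
definition Ah_phi :: "'a::field poly \<Rightarrow> 'a poly \<Rightarrow> 'a poly poly \<Rightarrow> 'a poly poly" where
  "Ah_phi h f A = (\<Sum>i\<le>degree A. Ah_mult h [:coeff A i:] (Ah_pow h [:f, 1:] i))"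

text \<open>tau_{alpha,beta} : x \<mapsto> alpha x + beta, y \<mapsto> alpha^(deg h - 1) y.\<close>
definition Ah_tau :: "'a::field poly \<Rightarrow> 'a \<Rightarrow> 'a \<Rightarrow> 'a poly poly \<Rightarrow> 'a poly poly" where
  "Ah_tau h \<alpha> \<beta> A =
     (\<Sum>i\<le>degree A. monom (smult (\<alpha> ^ ((degree h - 1) * i)) (pcompose (coeff A i) [:\<beta>, \<alpha>:])) i)"

definition Ah_P :: "'a::field poly \<Rightarrow> ('a \<times> 'a) set" where
  "Ah_P h = {(\<alpha>, \<beta>). \<alpha> \<noteq> 0 \<and> pcompose h [:\<beta>, \<alpha>:] = smult (\<alpha> ^ degree h) h}"

definition Ah_G :: "'a::field poly \<Rightarrow> 'a set" where
  "Ah_G h = {\<nu>. (1, \<nu>) \<in> Ah_P h}"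

definition Ah_tauP :: "'a::field poly \<Rightarrow> ('a poly poly \<Rightarrow> 'a poly poly) set" where
  "Ah_tauP h = (\<lambda>(\<alpha>, \<beta>). Ah_tau h \<alpha> \<beta>) ` Ah_P h"

text \<open>The automorphism group Aut_F(A_h) = {phi_f} \<rtimes> tau_P (the known description
  quoted in the context).\<close>
definition Ah_Aut :: "'a::field poly \<Rightarrow> ('a poly poly \<Rightarrow> 'a poly poly) set" where
  "Ah_Aut h = {Ah_phi h f \<circ> t | f t. t \<in> Ah_tauP h}"

definition invariants :: "('b \<Rightarrow> 'b) set \<Rightarrow> 'b set \<Rightarrow> 'b set" where
  "invariants \<A> S = {s \<in> S. \<forall>\<omega>\<in>\<A>. \<omega> s = s}"

end

theory Submission
  imports Defs
begin

text \<open>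
  1. Every element fixed by all phi_f lies in F[x].  Writing A = sum_i a_i(x) y^i of
     y-degree n > 0, the y^0-coefficient of phi_f(A) equals sum_i a_i D^i(1) with
     D(q) = f q + h q'.  Choosing f = x^m with m large makes D^i(1) monic of degree m i,
     so this coefficient has degree deg a_n + m n, which is too large to equal a_0.
     Hence A^Aut = F[x]^Aut, and on F[x] the phi_f act trivially, so F[x]^Aut consists
     of the polynomials p with p(alpha x + beta) = p(x) for all (alpha, beta) in P.

  2. Invariant theory of affine substitutions in one variable.  For a finite additive
     group G, the translation invariants form F[s] with s = prod_{nu in G} (x + c + nu)
     (division with remainder by s); if moreover alpha is a primitive l-th root of
     unity with alpha G = G, the additional invariance under x -> alpha x + beta
     forces a polynomial in s to be a polynomial in s^l.  Over an infinite field,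
     invariance under all dilations about a point forces constancy.
\<close>

section \<open>The action of the automorphisms on A_h\<close>

lemma smult_sum_right: "smult a (sum f A) = (\<Sum>i\<in>A. smult a (f i))"
  by (induction A rule: infinite_finite_induct) (auto simp: smult_add_right)

lemma Ah_mult_const_left: "Ah_mult h [:a:] B = smult a B"
proof -
  have "Ah_mult h [:a:] B = (\<Sum>j\<le>degree B. monom (a * coeff B j) j)"
    by (simp add: Ah_mult_def)
  also have "\<dots> = smult a (\<Sum>j\<le>degree B. monom (coeff B j) j)"
    by (simp add: smult_sum_right smult_monom)
  finally show ?thesis by (simp add: poly_as_sum_of_monoms)
qed

(* The y^0-coefficient of (y + f) P, i.e. the commutation rule y p = p y + h p'. *)
lemma coeff0_Ah_mult_linear:
  "coeff (Ah_mult h [:f, 1:] P) 0 = f * coeff P 0 + h * pderiv (coeff P 0)"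
proof -
  have "{..1::nat} = {0, 1}" by auto
  then show ?thesis
    unfolding Ah_mult_def
    by (simp add: coeff_sum coeff_monom Ah_delta_def if_distrib sum.delta cong: if_cong)
qed

lemma Ah_phi_emb: "Ah_phi h f [:p:] = [:p:]"
  by (simp add: Ah_phi_def Ah_mult_const_left)

lemma Ah_tau_emb: "Ah_tau h a b [:p:] = [:pcompose p [:b, a:]:]"
  by (simp add: Ah_tau_def monom_0)

lemma Ah_tau_identity: "Ah_tau h 1 0 = id"
  by (rule ext) (simp add: Ah_tau_def poly_as_sum_of_monoms)

lemma Ah_phi_in_Aut: "Ah_phi h f \<in> Ah_Aut h"
proof -
  have "(1, 0) \<in> Ah_P h" by (simp add: Ah_P_def)
  then have "Ah_tau h 1 0 \<in> Ah_tauP h" unfolding Ah_tauP_def by force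
  moreover have "Ah_phi h f = Ah_phi h f \<circ> Ah_tau h 1 0" by (simp add: Ah_tau_identity)
  ultimately show ?thesis unfolding Ah_Aut_def by blast
qed

lemma coeff0_Ah_phi:
  "coeff (Ah_phi h f A) 0 = (\<Sum>i\<le>degree A. coeff A i * ((\<lambda>q. f * q + h * pderiv q) ^^ i) 1)"
proof -
  have "coeff (Ah_pow h [:f, 1:] n) 0 = ((\<lambda>q. f * q + h * pderiv q) ^^ n) 1" for n
    by (induction n) (simp_all add: coeff0_Ah_mult_linear)
  then show ?thesis by (simp add: Ah_phi_def coeff_sum Ah_mult_const_left)
qed

section \<open>Elements fixed by all phi_f lie in F[x]\<close>

(* For m > deg h, the operator q -> x^m q + h q' raises degrees by exactly m and keeps
   polynomials monic, so its i-th iterate on 1 is monic of degree m i. *)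
lemma iterate_shift_derivation_monic:
  assumes "m > degree h"
  defines "Q i \<equiv> ((\<lambda>q. monom 1 m * q + h * pderiv q) ^^ i) 1"
  shows "degree (Q i) = m * i \<and> coeff (Q i) (m * i) = 1"
proof -
  have "degree (Q i) \<le> m * i \<and> coeff (Q i) (m * i) = 1"
  proof (induction i)
    case (Suc i)
    then have dq: "degree (Q i) \<le> m * i" and cq: "coeff (Q i) (m * i) = 1" by auto
    have d1: "degree (monom 1 m * Q i) \<le> m * Suc i"
      using degree_mult_le[of "monom (1::'a) m" "Q i"] dq by (simp add: degree_monom_eq)
    have "degree (pderiv (Q i)) \<le> degree (Q i)"
      by (rule degree_le) (simp add: coeff_pderiv coeff_eq_0)
    then have "degree (h * pderiv (Q i)) \<le> degree h + m * i"
      using degree_mult_le[of h "pderiv (Q i)"] dq by linarith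
    then have d2: "degree (h * pderiv (Q i)) < m * Suc i" using assms by simp
    have "degree (monom 1 m * Q i + h * pderiv (Q i)) \<le> m * Suc i"
      using d1 d2 degree_add_le by (meson less_imp_le)
    moreover have "coeff (monom 1 m * Q i + h * pderiv (Q i)) (m * Suc i) = 1"
      using cq coeff_eq_0[OF d2] by (simp add: coeff_monom_mult)
    ultimately show ?case by (simp add: Q_def)
  qed (simp add: Q_def)
  then show ?thesis using le_degree[of "Q i" "m * i"] by fastforce
qed

(* In sum_{i<=n} a_i Q_i with Q_i monic of degree m i and deg a_i < m for i < n,
   the top term a_n Q_n cannot be cancelled. *)
lemma coeff_graded_sum:
  fixes a Q :: "nat \<Rightarrow> 'a::idom poly"
  assumes degQ: "\<And>i. degree (Q i) = m * i" and lcQ: "\<And>i. coeff (Q i) (m * i) = 1"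
    and dega: "\<And>i. i < n \<Longrightarrow> degree (a i) < m"
  shows "coeff (\<Sum>i\<le>n. a i * Q i) (degree (a n) + m * n) = lead_coeff (a n)"
proof -
  have single_term: "coeff (a i * Q i) (degree (a n) + m * n) = (if i = n then lead_coeff (a n) else 0)"
    if "i \<le> n" for i
  proof (cases "i = n")
    case True
    then show ?thesis using coeff_mult_degree_sum[of "a n" "Q n"] degQ[of n] lcQ[of n] by simp
  next
    case False
    with that have "i < n" by simp
    have "degree (a i * Q i) \<le> degree (a i) + m * i"
      using degree_mult_le[of "a i" "Q i"] degQ[of i] by simp
    also have "\<dots> < m * Suc i" using dega[OF \<open>i < n\<close>] by simp
    also have "\<dots> \<le> m * n" using \<open>i < n\<close> by (metis Suc_leI mult_le_mono2)
    finally have "degree (a i * Q i) < degree (a n) + m * n" by linarith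
    then show ?thesis using False by (simp add: coeff_eq_0)
  qed
  have "coeff (\<Sum>i\<le>n. a i * Q i) (degree (a n) + m * n)
      = (\<Sum>i\<le>n. if i = n then lead_coeff (a n) else 0)"
    unfolding coeff_sum by (rule sum.cong) (simp_all add: single_term)
  then show ?thesis by simp
qed

(* An element fixed by every phi_f has y-degree 0: otherwise take f = x^m with m exceeding
   deg h and all deg a_i; then the y^0-coefficient a_0 of phi_f(A) = A would have degree at
   least m. *)
lemma fixed_by_all_phi_imp_y_degree_0:
  assumes fixed: "\<And>f. Ah_phi h f A = A"
  shows "degree A = 0"
proof (rule ccontr)
  assume pos: "degree A \<noteq> 0"
  define n where "n = degree A"
  define m where "m = degree h + (\<Sum>i\<le>n. degree (coeff A i)) + 1"
  define Q where "Q i = ((\<lambda>q. monom 1 m * q + h * pderiv q) ^^ i) 1" for i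
  have small: "degree (coeff A i) < m" if "i \<le> n" for i
    using member_le_sum[of i "{..n}" "\<lambda>i. degree (coeff A i)"] that unfolding m_def by simp
  have Q: "degree (Q i) = m * i" "coeff (Q i) (m * i) = 1" for i
    using iterate_shift_derivation_monic[of h m i] unfolding Q_def m_def by auto
  have "coeff A 0 = (\<Sum>i\<le>n. coeff A i * Q i)"
    using coeff0_Ah_phi[of h "monom 1 m" A] fixed unfolding Q_def n_def by simp
  then have "coeff (coeff A 0) (degree (coeff A n) + m * n) = lead_coeff (coeff A n)"
    using coeff_graded_sum[of Q m n "coeff A"] Q small by simp
  moreover have "coeff A n \<noteq> 0" using pos unfolding n_def by (metis degree_0 leading_coeff_0_iff)
  moreover have "degree (coeff A 0) < degree (coeff A n) + m * n"
  proof -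
    have "m \<le> m * n" using pos unfolding n_def by simp
    then show ?thesis using small[of 0] by linarith
  qed
  ultimately show False using coeff_eq_0 by fastforce
qed

section \<open>Reduction to polynomials in x\<close>

lemma Ah_invariants_in_Fx: "invariants (Ah_Aut h) UNIV = invariants (Ah_Aut h) Ah_Fx"
proof (intro equalityI subsetI)
  fix s assume s: "s \<in> invariants (Ah_Aut h) UNIV"
  then have "Ah_phi h f s = s" for f using Ah_phi_in_Aut unfolding invariants_def by blast
  then have "degree s = 0" by (rule fixed_by_all_phi_imp_y_degree_0)
  then have "s = Ah_emb (coeff s 0)" unfolding Ah_emb_def by (metis degree_eq_zeroE coeff_pCons_0)
  then show "s \<in> invariants (Ah_Aut h) Ah_Fx"
    using s unfolding invariants_def Ah_Fx_def by auto
qed (auto simp: invariants_def)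

(* Since the phi_f fix F[x] pointwise, an element of F[x] is invariant iff it is fixed by
   every tau_{alpha,beta}. *)
lemma Ah_Fx_invariants_tau:
  "invariants (Ah_Aut h) Ah_Fx = Ah_emb ` {p. \<forall>t\<in>Ah_tauP h. t [:p:] = [:p:]}"
proof (intro equalityI subsetI)
  fix s assume "s \<in> invariants (Ah_Aut h) Ah_Fx"
  then obtain p where s: "s = [:p:]" and inv: "\<And>\<omega>. \<omega> \<in> Ah_Aut h \<Longrightarrow> \<omega> [:p:] = [:p:]"
    unfolding invariants_def Ah_Fx_def Ah_emb_def by auto
  have "t [:p:] = [:p:]" if t: "t \<in> Ah_tauP h" for t
  proof -
    have "Ah_phi h 0 \<circ> t \<in> Ah_Aut h" unfolding Ah_Aut_def using t by blast
    then have "Ah_phi h 0 (t [:p:]) = [:p:]" using inv[of "Ah_phi h 0 \<circ> t"] by simp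
    moreover obtain a b where "t = Ah_tau h a b" using t unfolding Ah_tauP_def by auto
    ultimately show ?thesis by (simp add: Ah_phi_emb Ah_tau_emb)
  qed
  then show "s \<in> Ah_emb ` {p. \<forall>t\<in>Ah_tauP h. t [:p:] = [:p:]}"
    using s unfolding Ah_emb_def by blast
next
  fix s assume "s \<in> Ah_emb ` {p. \<forall>t\<in>Ah_tauP h. t [:p:] = [:p:]}"
  then obtain p where s: "s = [:p:]" and inv: "\<forall>t\<in>Ah_tauP h. t [:p:] = [:p:]"
    unfolding Ah_emb_def by auto
  have "\<omega> s = s" if "\<omega> \<in> Ah_Aut h" for \<omega>
    using that inv s unfolding Ah_Aut_def by (auto simp: Ah_phi_emb)
  then show "s \<in> invariants (Ah_Aut h) Ah_Fx"
    unfolding invariants_def Ah_Fx_def Ah_emb_def using s by auto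
qed

lemma Ah_Fx_invariants_P:
  "invariants (Ah_Aut h) Ah_Fx = Ah_emb ` {p. \<forall>(a, b)\<in>Ah_P h. pcompose p [:b, a:] = p}"
proof -
  have "(\<forall>t\<in>Ah_tauP h. t [:p:] = [:p:]) \<longleftrightarrow> (\<forall>(a, b)\<in>Ah_P h. pcompose p [:b, a:] = p)" for p
    unfolding Ah_tauP_def by (auto simp: Ah_tau_emb)
  then show ?thesis unfolding Ah_Fx_invariants_tau by simp
qed

section \<open>Polynomials invariant under affine substitutions\<close>

lemma pcompose_linear_linear: "pcompose [:a, b:] [:c, d:] = [:a + b * c, b * d:]"
  by (simp add: pcompose_pCons algebra_simps)

lemma pcompose_power_left: "pcompose (p ^ n) q = (pcompose p q) ^ n"
  by (induction n) (simp_all add: pcompose_mult pcompose_1)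

lemma pcompose_monom: "pcompose (monom c i) r = smult c (r ^ i)"
  by (simp add: monom_altdef pcompose_smult pcompose_power_left pcompose_pCons)

lemma finite_inj_image_self:
  assumes "finite G" "inj_on g G" "g ` G \<subseteq> G"
  shows "g ` G = G"
  using assms by (intro card_subset_eq) (auto simp: card_image)

lemma translate_finite_add_closed:
  fixes G :: "'a::ab_group_add set"
  assumes "finite G" "\<And>a b. a \<in> G \<Longrightarrow> b \<in> G \<Longrightarrow> a + b \<in> G" "\<mu> \<in> G"
  shows "(\<lambda>\<nu>. \<nu> + \<mu>) ` G = G"
  using assms by (intro finite_inj_image_self) (auto simp: inj_on_def)

lemma prod_translates_invariant:
  fixes G :: "'a::field set"
  assumes "finite G" "\<And>a b. a \<in> G \<Longrightarrow> b \<in> G \<Longrightarrow> a + b \<in> G" "\<mu> \<in> G"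
  shows "pcompose (\<Prod>\<nu>\<in>G. [:c + \<nu>, 1:]) [:\<mu>, 1:] = (\<Prod>\<nu>\<in>G. [:c + \<nu>, 1:])"
proof -
  have "pcompose (\<Prod>\<nu>\<in>G. [:c + \<nu>, 1:]) [:\<mu>, 1:] = (\<Prod>\<nu>\<in>G. [:c + (\<nu> + \<mu>), 1:])"
    by (simp add: pcompose_prod pcompose_linear_linear add.assoc)
  also have "\<dots> = (\<Prod>\<nu>\<in>(\<lambda>\<nu>. \<nu> + \<mu>) ` G. [:c + \<nu>, 1:])"
    by (subst prod.reindex) (auto simp: inj_on_def)
  also have "\<dots> = (\<Prod>\<nu>\<in>G. [:c + \<nu>, 1:])" using translate_finite_add_closed[OF assms] by simp
  finally show ?thesis .
qed

lemma degree_prod_translates: "degree (\<Prod>\<nu>\<in>G. [:c + \<nu>, 1:]) = card (G :: 'a::field set)"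
  by (subst degree_prod_eq_sum_degree) auto

(* Induction on the degree via division with remainder: quotient and remainder
   are again invariant, and an invariant remainder of degree < |G| takes the same value
   at all points of G, hence is constant. *)
lemma translation_invariants:
  fixes G :: "'a::field set" and r :: "'a poly"
  assumes fin: "finite G" and ne: "G \<noteq> {}" and dr: "degree r = card G"
    and rinv: "\<forall>\<nu>\<in>G. pcompose r [:\<nu>, 1:] = r"
  shows "{p. \<forall>\<nu>\<in>G. pcompose p [:\<nu>, 1:] = p} = range (\<lambda>q. pcompose q r)"
proof (intro equalityI subsetI)
  fix p assume "p \<in> range (\<lambda>q. pcompose q r)"
  then show "p \<in> {p. \<forall>\<nu>\<in>G. pcompose p [:\<nu>, 1:] = p}"
    using rinv by (auto simp: pcompose_assoc[symmetric])
next
  have cG: "card G > 0" using fin ne by (simp add: card_gt_0_iff)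
  have r0: "r \<noteq> 0" using dr cG by auto
  fix p assume "p \<in> {p. \<forall>\<nu>\<in>G. pcompose p [:\<nu>, 1:] = p}"
  then have "\<forall>\<nu>\<in>G. pcompose p [:\<nu>, 1:] = p" by simp
  then show "p \<in> range (\<lambda>q. pcompose q r)"
  proof (induction "degree p" arbitrary: p rule: less_induct)
    case less
    show ?case
    proof (cases "degree p = 0")
      case True
      then obtain c where "p = [:c:]" by (metis degree_eq_zeroE)
      then show ?thesis by (intro range_eqI[of _ _ "[:c:]"]) simp
    next
      case False
      define q where "q = p div r"
      define rm where "rm = p mod r"
      have pe: "p = q * r + rm" unfolding q_def rm_def by simp
      have drm: "degree rm < degree r"
        using degree_mod_less[OF r0, of p] dr cG unfolding rm_def by (cases "p mod r = 0") auto
      have inv: "pcompose q [:\<nu>, 1:] = q \<and> pcompose rm [:\<nu>, 1:] = rm" if nu: "\<nu> \<in> G" for \<nu>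
      proof -
        let ?T = "[:\<nu>, 1:]"
        have "p = pcompose q ?T * r + pcompose rm ?T"
          using less.prems nu rinv pe by (metis pcompose_add pcompose_mult)
        then have e: "(pcompose q ?T - q) * r = rm - pcompose rm ?T" using pe by (simp add: algebra_simps)
        have "degree (rm - pcompose rm ?T) < degree r"
          using drm degree_diff_le_max[of rm "pcompose rm ?T"] by (simp add: degree_pcompose)
        then have "pcompose q ?T - q = 0"
          using e r0 by (metis degree_mult_eq le_add2 not_le mult_eq_0_iff)
        then show ?thesis using e by simp
      qed
      have "rm = [:poly rm 0:]"
      proof (rule poly_eqI_degree[of G])
        fix x assume "x \<in> G"
        then have "poly (pcompose rm [:x, 1:]) 0 = poly rm 0" using inv by simp
        then show "poly rm x = poly [:poly rm 0:] x" by (simp add: poly_pcompose)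
      qed (use drm dr cG in auto)
      moreover have "degree q < degree p"
        unfolding q_def using False dr cG by (intro degree_div_less) auto
      then obtain q' where "q = pcompose q' r" using less.hyps inv by blast
      ultimately have "p = pcompose (pCons (poly rm 0) q') r"
        using pe by (simp add: pcompose_pCons algebra_simps)
      then show ?thesis by blast
    qed
  qed
qed

lemma poly_in_power_of_x:
  fixes q :: "'a::comm_ring_1 poly"
  assumes l: "l > 0" and supp: "\<forall>i. coeff q i \<noteq> 0 \<longrightarrow> l dvd i"
  shows "\<exists>q'. q = pcompose q' (monom 1 l)"
proof -
  define q' where "q' = (\<Sum>i\<le>degree q. monom (coeff q (i * l)) i)"
  have "pcompose q' (monom 1 l) = (\<Sum>i\<le>degree q. monom (coeff q (i * l)) (i * l))"
    unfolding q'_def by (simp add: pcompose_sum pcompose_monom monom_power smult_monom mult.commute)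
  also have "\<dots> = q"
  proof (rule poly_eqI)
    fix n
    show "coeff (\<Sum>i\<le>degree q. monom (coeff q (i * l)) (i * l)) n = coeff q n"
    proof (cases "l dvd n")
      case True
      then obtain k where k: "n = k * l" by (metis dvd_def mult.commute)
      have eq: "(i * l = n) \<longleftrightarrow> i = k" for i using k l by simp
      show ?thesis
      proof (cases "k \<le> degree q")
        case False
        have "k \<le> k * l" using l by simp
        then have "degree q < k * l" using False by linarith
        then show ?thesis using False l by (simp add: coeff_sum coeff_monom eq k coeff_eq_0)
      qed (use l in \<open>simp add: coeff_sum coeff_monom eq k\<close>)
    next
      case False
      then have "(i * l = n) = False" for i by auto
      then show ?thesis using supp False by (auto simp: coeff_sum coeff_monom)
    qed
  qed
  finally show ?thesis by metis
qed

(* Invariance under x -> alpha x for a primitive l-th root of unity alpha kills every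
   coefficient at an exponent not divisible by l. *)
lemma root_of_unity_scaling_invariant:
  fixes q :: "'a::field poly"
  assumes l: "l > 0" and al: "\<alpha> ^ l = 1" and prim: "\<forall>k. 0 < k \<and> k < l \<longrightarrow> \<alpha> ^ k \<noteq> 1"
    and inv: "pcompose q [:0, \<alpha>:] = q"
  shows "\<exists>q'. q = pcompose q' (monom 1 l)"
proof (rule poly_in_power_of_x[OF l], intro allI impI)
  fix i assume nz: "coeff q i \<noteq> 0"
  have "\<alpha> ^ i * coeff q i = coeff q i"
    using arg_cong[OF inv, of "\<lambda>r. coeff r i"] by (simp add: coeff_pcompose_linear)
  then have "\<alpha> ^ i = 1" using nz by simp
  moreover have "\<alpha> ^ i = (\<alpha> ^ l) ^ (i div l) * \<alpha> ^ (i mod l)"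
  proof -
    have "\<alpha> ^ i = \<alpha> ^ (l * (i div l) + i mod l)" by simp
    then show ?thesis by (simp only: power_add power_mult)
  qed
  ultimately have "\<alpha> ^ (i mod l) = 1" using al by simp
  moreover have "i mod l < l" using l by simp
  ultimately have "i mod l = 0" using prim by (cases "i mod l = 0") auto
  then show "l dvd i" by auto
qed

(* Over an infinite field some nonzero a has a^i \<noteq> 1 (i > 0), so invariance under all
   dilations x -> a x forces a polynomial to be constant. *)
lemma dilation_invariant_const:
  fixes q :: "'a::field poly"
  assumes inf: "infinite (UNIV :: 'a set)" and inv: "\<And>a. a \<noteq> 0 \<Longrightarrow> pcompose q [:0, a:] = q"
  shows "degree q = 0"
proof (rule ccontr)
  assume pos: "degree q \<noteq> 0"
  have "\<exists>a::'a. a \<noteq> 0 \<and> a ^ degree q \<noteq> 1"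
  proof (rule ccontr)
    assume "\<not> ?thesis"
    then have "UNIV \<subseteq> insert 0 {x::'a. poly (monom 1 (degree q) - 1) x = 0}"
      by (auto simp: poly_monom)
    moreover have "monom (1::'a) (degree q) - 1 \<noteq> 0"
    proof
      assume "monom (1::'a) (degree q) - 1 = 0"
      then have "coeff (monom (1::'a) (degree q) - 1) (degree q) = 0" by simp
      then show False using pos by simp
    qed
    ultimately show False using inf poly_roots_finite finite_subset by (metis finite_insert)
  qed
  then obtain a :: 'a where a: "a \<noteq> 0" "a ^ degree q \<noteq> 1" by blast
  have "coeff (pcompose q [:0, a:]) (degree q) = lead_coeff q" using inv[OF a(1)] by simp
  then have "a ^ degree q * lead_coeff q = lead_coeff q" by (simp add: coeff_pcompose_linear)
  moreover have "lead_coeff q \<noteq> 0" using pos by auto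
  ultimately show False using a(2) by simp
qed

(* The same for the dilations x -> a x + (lam - a lam) about a point lam, by conjugating
   with the translation x -> x + lam. *)
lemma dilation_about_point_invariant_const:
  fixes p :: "'a::field poly"
  assumes inf: "infinite (UNIV :: 'a set)"
    and inv: "\<And>a. a \<noteq> 0 \<Longrightarrow> pcompose p [:lam - a * lam, a:] = p"
  shows "degree p = 0"
proof -
  define q where "q = pcompose p [:lam, 1:]"
  have "pcompose q [:0, a:] = q" if "a \<noteq> 0" for a
  proof -
    have "pcompose q [:0, a:] = pcompose (pcompose p [:lam - a * lam, a:]) [:lam, 1:]"
      unfolding q_def by (simp add: pcompose_assoc[symmetric] pcompose_linear_linear)
    then show ?thesis using inv[OF that] unfolding q_def by simp
  qed
  then have "degree q = 0" by (rule dilation_invariant_const[OF inf])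
  moreover have "p = pcompose q [:- lam, 1:]"
    unfolding q_def by (simp add: pcompose_assoc[symmetric] pcompose_linear_linear)
  ultimately show ?thesis by (simp add: degree_pcompose)
qed

(* If multiplication by alpha permutes the finite set G containing 0, then comparing
   the products of the nonzero elements gives alpha^(|G|-1) = 1. *)
lemma power_card_of_scaling_closed:
  fixes G :: "'a::field set"
  assumes fin: "finite G" and G0: "0 \<in> G" and a0: "\<alpha> \<noteq> 0" and cl: "\<forall>\<nu>\<in>G. \<alpha> * \<nu> \<in> G"
  shows "\<alpha> ^ card G = \<alpha>"
proof -
  define G' where "G' = G - {0}"
  have fin': "finite G'" using fin G'_def by simp
  have "(\<lambda>\<nu>. \<alpha> * \<nu>) ` G' = G'"
    using fin' cl a0 by (intro finite_inj_image_self) (auto simp: G'_def inj_on_def)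
  then have "(\<Prod>\<nu>\<in>G'. \<nu>) = (\<Prod>\<nu>\<in>(\<lambda>\<nu>. \<alpha> * \<nu>) ` G'. \<nu>)" by simp
  also have "\<dots> = (\<Prod>\<nu>\<in>G'. \<alpha> * \<nu>)" using a0 by (subst prod.reindex) (auto simp: inj_on_def)
  also have "\<dots> = \<alpha> ^ card G' * (\<Prod>\<nu>\<in>G'. \<nu>)" by (simp add: prod.distrib)
  finally have "\<alpha> ^ card G' = 1" using fin' by (simp add: G'_def)
  moreover have "card G = Suc (card G')" using fin G0 G'_def by (metis card.remove)
  ultimately show ?thesis by simp
qed

(* With c = beta/(alpha - 1) the fixed point of x -> alpha x + beta, the product
   s = prod_{nu in G} (x + c + nu) satisfies s(alpha x + beta) = alpha s(x) when alpha G = G. *)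
lemma prod_translates_affine:
  fixes G :: "'a::field set" and \<alpha> \<beta> :: 'a
  assumes fin: "finite G" and G0: "0 \<in> G" and a0: "\<alpha> \<noteq> 0" and a1: "\<alpha> \<noteq> 1"
    and cl: "\<forall>\<nu>\<in>G. \<alpha> * \<nu> \<in> G"
  defines "s \<equiv> \<Prod>\<nu>\<in>G. [:\<beta> / (\<alpha> - 1) + \<nu>, 1:]"
  shows "pcompose s [:\<beta>, \<alpha>:] = smult \<alpha> s"
proof -
  define c where "c = \<beta> / (\<alpha> - 1)"
  have factor: "pcompose [:c + \<nu>, 1:] [:\<beta>, \<alpha>:] = smult \<alpha> [:c + \<nu> / \<alpha>, 1:]" for \<nu>
  proof -
    have "c + \<nu> + \<beta> = \<alpha> * (c + \<nu> / \<alpha>)" unfolding c_def using a0 a1 by (simp add: field_simps)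
    then show ?thesis by (simp add: pcompose_linear_linear)
  qed
  have img: "(\<lambda>\<nu>. \<alpha> * \<nu>) ` G = G"
    using fin cl a0 by (intro finite_inj_image_self) (auto simp: inj_on_def)
  have "pcompose s [:\<beta>, \<alpha>:] = (\<Prod>\<nu>\<in>G. smult \<alpha> [:c + \<nu> / \<alpha>, 1:])"
    unfolding s_def c_def[symmetric] pcompose_prod factor ..
  also have "\<dots> = smult (\<alpha> ^ card G) (\<Prod>\<nu>\<in>G. [:c + \<nu> / \<alpha>, 1:])"
    by (simp only: prod_smult prod_constant)
  also have "(\<Prod>\<nu>\<in>G. [:c + \<nu> / \<alpha>, 1:]) = (\<Prod>\<nu>\<in>(\<lambda>\<nu>. \<alpha> * \<nu>) ` G. [:c + \<nu> / \<alpha>, 1:])"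
    using img by simp
  also have "\<dots> = s" unfolding s_def c_def using a0 by (subst prod.reindex) (auto simp: inj_on_def)
  finally have "pcompose s [:\<beta>, \<alpha>:] = smult (\<alpha> ^ card G) s" .
  then show ?thesis using power_card_of_scaling_closed[OF fin G0 a0 cl] by simp
qed

(* Joint invariants of the translations by a finite additive group G and of
   x -> alpha x + beta, alpha a primitive l-th root of unity with alpha G = G: writing an
   invariant as q(s), invariance under the affine map gives q(alpha x) = q(x), so q is a
   polynomial in x^l. *)
lemma translation_affine_invariants:
  fixes G :: "'a::field set" and \<alpha> \<beta> :: 'a
  assumes fin: "finite G" and add: "\<And>a b. a \<in> G \<Longrightarrow> b \<in> G \<Longrightarrow> a + b \<in> G" and G0: "0 \<in> G"
    and cl: "\<forall>\<nu>\<in>G. \<alpha> * \<nu> \<in> G"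
    and l1: "l > 1" and al: "\<alpha> ^ l = 1" and prim: "\<forall>k. 0 < k \<and> k < l \<longrightarrow> \<alpha> ^ k \<noteq> 1"
  defines "s \<equiv> \<Prod>\<nu>\<in>G. [:\<beta> / (\<alpha> - 1) + \<nu>, 1:]"
  shows "{p. (\<forall>\<nu>\<in>G. pcompose p [:\<nu>, 1:] = p) \<and> pcompose p [:\<beta>, \<alpha>:] = p}
    = range (\<lambda>q. pcompose q (s ^ l))"
proof -
  have a0: "\<alpha> \<noteq> 0" using al l1 by (metis power_0_left zero_neq_one not_one_less_zero gr_zeroI)
  have a1: "\<alpha> \<noteq> 1" using prim l1 by auto
  have ds: "degree s = card G" unfolding s_def by (rule degree_prod_translates)
  have cG: "card G > 0" using fin G0 card_gt_0_iff by blast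
  have s_transl: "\<forall>\<mu>\<in>G. pcompose s [:\<mu>, 1:] = s"
    unfolding s_def using prod_translates_invariant[OF fin add] by blast
  have s_affine: "pcompose s [:\<beta>, \<alpha>:] = smult \<alpha> s"
    unfolding s_def by (rule prod_translates_affine[OF fin G0 a0 a1 cl])
  show ?thesis
  proof (intro equalityI subsetI)
    fix p assume "p \<in> {p. (\<forall>\<nu>\<in>G. pcompose p [:\<nu>, 1:] = p) \<and> pcompose p [:\<beta>, \<alpha>:] = p}"
    then have p_transl: "\<forall>\<nu>\<in>G. pcompose p [:\<nu>, 1:] = p" and p_affine: "pcompose p [:\<beta>, \<alpha>:] = p"
      by auto
    obtain q where q: "p = pcompose q s"
      using translation_invariants[OF fin _ ds s_transl] p_transl G0 by blast
    have "pcompose (pcompose q [:0, \<alpha>:]) s = pcompose q (smult \<alpha> s)"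
      by (simp add: pcompose_assoc[symmetric] pcompose_pCons)
    also have "\<dots> = pcompose q s"
      using q s_affine p_affine by (simp add: pcompose_assoc[symmetric])
    finally have "pcompose (pcompose q [:0, \<alpha>:] - q) s = 0" by (simp add: pcompose_diff)
    then have "pcompose q [:0, \<alpha>:] = q" using ds cG pcompose_eq_0 by fastforce
    then obtain q' where "q = pcompose q' (monom 1 l)"
      using root_of_unity_scaling_invariant[of l \<alpha> q] l1 al prim by auto
    then have "p = pcompose q' (s ^ l)"
      using q by (simp add: pcompose_assoc[symmetric] pcompose_monom)
    then show "p \<in> range (\<lambda>q. pcompose q (s ^ l))" by blast
  next
    fix p assume "p \<in> range (\<lambda>q. pcompose q (s ^ l))"
    then obtain q where q: "p = pcompose q (s ^ l)" by blast
    have "\<forall>\<nu>\<in>G. pcompose p [:\<nu>, 1:] = p"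
      using q s_transl by (simp add: pcompose_assoc[symmetric] pcompose_power_left)
    moreover have "pcompose p [:\<beta>, \<alpha>:] = p"
      using q s_affine al by (simp add: pcompose_assoc[symmetric] pcompose_power_left smult_power)
    ultimately show "p \<in> {p. (\<forall>\<nu>\<in>G. pcompose p [:\<nu>, 1:] = p) \<and> pcompose p [:\<beta>, \<alpha>:] = p}"
      by simp
  qed
qed

section \<open>The translation group G of h\<close>

lemma Ah_G_iff: "\<nu> \<in> Ah_G h \<longleftrightarrow> pcompose h [:\<nu>, 1:] = h"
  by (simp add: Ah_G_def Ah_P_def)

lemma Ah_G_zero: "0 \<in> Ah_G h"
  by (simp add: Ah_G_iff)

lemma Ah_G_add: "\<mu> \<in> Ah_G h \<Longrightarrow> \<nu> \<in> Ah_G h \<Longrightarrow> \<mu> + \<nu> \<in> Ah_G h"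
  by (simp add: Ah_G_iff pcompose_assoc add.commute
        flip: pcompose_linear_linear[of \<mu> 1 \<nu> 1, simplified])

(* Every nu in G is a root of h - h(0), a nonzero polynomial when deg h \<ge> 1. *)
lemma Ah_G_finite:
  assumes "degree h \<ge> 1"
  shows "finite (Ah_G h)"
proof -
  have "h - [:poly h 0:] \<noteq> 0" using assms by (metis degree_pCons_0 eq_iff_diff_eq_0 not_one_le_zero)
  moreover have "Ah_G h \<subseteq> {x. poly (h - [:poly h 0:]) x = 0}"
  proof
    fix \<nu> assume "\<nu> \<in> Ah_G h"
    then have "poly (pcompose h [:\<nu>, 1:]) 0 = poly h 0" by (simp add: Ah_G_iff)
    then show "\<nu> \<in> {x. poly (h - [:poly h 0:]) x = 0}" by (simp add: poly_pcompose)
  qed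
  ultimately show ?thesis using poly_roots_finite finite_subset by blast
qed

(* G is stable under multiplication by alpha for (alpha, beta) in P: conjugating the
   translation by nu with x -> alpha x + beta gives the translation by alpha nu. *)
lemma Ah_G_scaling:
  assumes P: "(\<alpha>, \<beta>) \<in> Ah_P h" and G: "\<nu> \<in> Ah_G h"
  shows "\<alpha> * \<nu> \<in> Ah_G h"
proof -
  have a0: "\<alpha> \<noteq> 0" and hP: "pcompose h [:\<beta>, \<alpha>:] = smult (\<alpha> ^ degree h) h"
    using P by (auto simp: Ah_P_def)
  have hG: "pcompose h [:\<nu>, 1:] = h" using G by (simp add: Ah_G_iff)
  have undo: "pcompose (pcompose X [:\<beta>, \<alpha>:]) [:- \<beta> / \<alpha>, 1 / \<alpha>:] = X" for X
    using a0 by (simp add: pcompose_assoc[symmetric] pcompose_linear_linear)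
  have "pcompose (pcompose h [:\<alpha> * \<nu>, 1:]) [:\<beta>, \<alpha>:] = pcompose (pcompose h [:\<beta>, \<alpha>:]) [:\<nu>, 1:]"
    by (simp add: pcompose_assoc[symmetric] pcompose_linear_linear algebra_simps)
  also have "\<dots> = pcompose h [:\<beta>, \<alpha>:]" using hP hG by (simp add: pcompose_smult)
  finally have "pcompose h [:\<alpha> * \<nu>, 1:] = h" using undo by metis
  then show ?thesis by (simp add: Ah_G_iff)
qed

section \<open>The invariant subalgebra in the individual cases\<close>

lemma Ah_Fx_invariants_phi_only:
  "Ah_Aut h = range (Ah_phi h) \<Longrightarrow> invariants (Ah_Aut h) Ah_Fx = Ah_Fx"
  unfolding invariants_def Ah_Fx_def Ah_emb_def by (auto simp: Ah_phi_emb)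

lemma Ah_P_dilations:
  assumes h: "h = smult \<gamma> ([:- lam, 1:] ^ degree h)" and a: "a \<noteq> 0"
  shows "(a, lam - a * lam) \<in> Ah_P h"
proof -
  have "pcompose [:- lam, 1:] [:lam - a * lam, a:] = smult a [:- lam, 1:]"
    by (simp add: pcompose_linear_linear)
  then have "pcompose h [:lam - a * lam, a:] = smult \<gamma> (smult (a ^ degree h) ([:- lam, 1:] ^ degree h))"
    by (subst h) (simp only: pcompose_power_left pcompose_smult smult_power)
  also have "\<dots> = smult (a ^ degree h) h" by (subst (2) h) (simp add: mult.commute)
  finally show ?thesis using a by (simp add: Ah_P_def)
qed

lemma Ah_Fx_invariants_power_of_linear:
  fixes h :: "'a::field poly"
  assumes h: "h = smult \<gamma> ([:- lam, 1:] ^ degree h)" and inf: "infinite (UNIV :: 'a set)"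
  shows "invariants (Ah_Aut h) Ah_Fx = Ah_emb ` range (\<lambda>c. [:c:])"
proof -
  have "{p. \<forall>(a, b)\<in>Ah_P h. pcompose p [:b, a:] = p} = range (\<lambda>c. [:c:])"
  proof (intro equalityI subsetI)
    fix p assume "p \<in> {p. \<forall>(a, b)\<in>Ah_P h. pcompose p [:b, a:] = p}"
    then have dilation: "pcompose p [:lam - a * lam, a:] = p" if "a \<noteq> 0" for a
      using Ah_P_dilations[OF h that] by auto
    have "degree p = 0" using dilation_about_point_invariant_const[OF inf dilation] .
    then show "p \<in> range (\<lambda>c. [:c:])" by (metis degree_eq_zeroE range_eqI)
  qed auto
  then show ?thesis unfolding Ah_Fx_invariants_P by simp
qed

lemma Ah_Fx_invariants_translations:
  assumes dh: "degree h \<ge> 1" and tauP: "Ah_tauP h = (\<lambda>\<nu>. Ah_tau h 1 \<nu>) ` Ah_G h"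
  shows "invariants (Ah_Aut h) Ah_Fx = Ah_emb ` range (\<lambda>p. pcompose p (\<Prod>\<nu>\<in>Ah_G h. [:\<nu>, 1:]))"
proof -
  have fin: "finite (Ah_G h)" by (rule Ah_G_finite[OF dh])
  have "{p. \<forall>t\<in>Ah_tauP h. t [:p:] = [:p:]} = {p. \<forall>\<nu>\<in>Ah_G h. pcompose p [:\<nu>, 1:] = p}"
    unfolding tauP by (auto simp: Ah_tau_emb)
  also have "\<dots> = range (\<lambda>p. pcompose p (\<Prod>\<nu>\<in>Ah_G h. [:\<nu>, 1:]))"
  proof (rule translation_invariants[OF fin])
    show "degree (\<Prod>\<nu>\<in>Ah_G h. [:\<nu>, 1:]) = card (Ah_G h)"
      using degree_prod_translates[of 0] by simp
    show "\<forall>\<mu>\<in>Ah_G h. pcompose (\<Prod>\<nu>\<in>Ah_G h. [:\<nu>, 1:]) [:\<mu>, 1:] = (\<Prod>\<nu>\<in>Ah_G h. [:\<nu>, 1:])"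
      using prod_translates_invariant[OF fin Ah_G_add, of _ 0] by simp
  qed (use Ah_G_zero in auto)
  finally show ?thesis unfolding Ah_Fx_invariants_tau by simp
qed

lemma Ah_Fx_invariants_translations_root_of_unity:
  assumes dh: "degree h \<ge> 1" and l1: "l > 1" and P: "(\<alpha>, \<beta>) \<in> Ah_P h" and al: "\<alpha> ^ l = 1"
    and prim: "\<forall>k. 0 < k \<and> k < l \<longrightarrow> \<alpha> ^ k \<noteq> 1"
    and tauP: "Ah_tauP h = {Ah_tau h 1 \<nu> \<circ> (Ah_tau h \<alpha> \<beta> ^^ k) | \<nu> k. \<nu> \<in> Ah_G h}"
  shows "invariants (Ah_Aut h) Ah_Fx
    = Ah_emb ` range (\<lambda>p. pcompose p (\<Prod>\<nu>\<in>Ah_G h. [:\<beta> / (\<alpha> - 1) + \<nu>, 1:] ^ l))"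
proof -
  have scaling: "\<forall>\<nu>\<in>Ah_G h. \<alpha> * \<nu> \<in> Ah_G h" using Ah_G_scaling[OF P] by blast
  have "{p. \<forall>t\<in>Ah_tauP h. t [:p:] = [:p:]}
      = {p. (\<forall>\<nu>\<in>Ah_G h. pcompose p [:\<nu>, 1:] = p) \<and> pcompose p [:\<beta>, \<alpha>:] = p}"
  proof (intro equalityI subsetI)
    fix p assume "p \<in> {p. \<forall>t\<in>Ah_tauP h. t [:p:] = [:p:]}"
    then have fixed: "(Ah_tau h 1 \<nu> \<circ> (Ah_tau h \<alpha> \<beta> ^^ k)) [:p:] = [:p:]"
      if "\<nu> \<in> Ah_G h" for \<nu> k
      using that unfolding tauP by blast
    show "p \<in> {p. (\<forall>\<nu>\<in>Ah_G h. pcompose p [:\<nu>, 1:] = p) \<and> pcompose p [:\<beta>, \<alpha>:] = p}"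
      using fixed[of _ 0] fixed[OF Ah_G_zero, of 1] by (simp add: Ah_tau_emb Ah_tau_identity)
  next
    fix p assume "p \<in> {p. (\<forall>\<nu>\<in>Ah_G h. pcompose p [:\<nu>, 1:] = p) \<and> pcompose p [:\<beta>, \<alpha>:] = p}"
    then have transl: "\<forall>\<nu>\<in>Ah_G h. pcompose p [:\<nu>, 1:] = p" and affine: "pcompose p [:\<beta>, \<alpha>:] = p"
      by auto
    have "(Ah_tau h \<alpha> \<beta> ^^ k) [:p:] = [:p:]" for k
      by (induction k) (simp_all add: Ah_tau_emb affine)
    then show "p \<in> {p. \<forall>t\<in>Ah_tauP h. t [:p:] = [:p:]}"
      unfolding tauP using transl by (auto simp: Ah_tau_emb)
  qed
  also have "\<dots> = range (\<lambda>p. pcompose p ((\<Prod>\<nu>\<in>Ah_G h. [:\<beta> / (\<alpha> - 1) + \<nu>, 1:]) ^ l))"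
    by (rule translation_affine_invariants[OF Ah_G_finite[OF dh] Ah_G_add Ah_G_zero scaling l1 al prim])
  finally show ?thesis unfolding Ah_Fx_invariants_tau by (simp add: prod_power_distrib)
qed

theorem theorem8p9:
  fixes h :: "'a::field poly"
  assumes "degree h \<ge> 1"
  shows "invariants (Ah_Aut h) UNIV = invariants (Ah_Aut h) Ah_Fx
    \<and> (Ah_Aut h = range (Ah_phi h) \<longrightarrow> invariants (Ah_Aut h) Ah_Fx = Ah_Fx)
    \<and> ((\<exists>\<gamma> lam. \<gamma> \<noteq> 0 \<and> h = smult \<gamma> ([:-lam, 1:] ^ degree h)) \<and> infinite (UNIV :: 'a set)
         \<longrightarrow> invariants (Ah_Aut h) Ah_Fx = Ah_emb ` range (\<lambda>c. [:c:]))
    \<and> (Ah_tauP h = (\<lambda>\<nu>. Ah_tau h 1 \<nu>) ` Ah_G h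
         \<longrightarrow> invariants (Ah_Aut h) Ah_Fx
               = Ah_emb ` range (\<lambda>p. pcompose p (\<Prod>\<nu>\<in>Ah_G h. [:\<nu>, 1:])))
    \<and> (\<forall>\<alpha> \<beta> (l::nat).
         l > 1 \<and> (\<alpha>, \<beta>) \<in> Ah_P h \<and> \<alpha> ^ l = 1 \<and> (\<forall>k. 0 < k \<and> k < l \<longrightarrow> \<alpha> ^ k \<noteq> 1)
         \<and> Ah_tauP h = {Ah_tau h 1 \<nu> \<circ> (Ah_tau h \<alpha> \<beta> ^^ k) | \<nu> k. \<nu> \<in> Ah_G h}
         \<longrightarrow> invariants (Ah_Aut h) Ah_Fx
               = Ah_emb ` range (\<lambda>p. pcompose p
                   (\<Prod>\<nu>\<in>Ah_G h. [:\<beta> / (\<alpha> - 1) + \<nu>, 1:] ^ l)))"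
proof (intro conjI impI allI)
  show "invariants (Ah_Aut h) UNIV = invariants (Ah_Aut h) Ah_Fx"
    by (rule Ah_invariants_in_Fx)
next
  assume "Ah_Aut h = range (Ah_phi h)"
  then show "invariants (Ah_Aut h) Ah_Fx = Ah_Fx" by (rule Ah_Fx_invariants_phi_only)
next
  assume "(\<exists>\<gamma> lam. \<gamma> \<noteq> 0 \<and> h = smult \<gamma> ([:-lam, 1:] ^ degree h)) \<and> infinite (UNIV :: 'a set)"
  then obtain \<gamma> lam where "h = smult \<gamma> ([:-lam, 1:] ^ degree h)" and "infinite (UNIV :: 'a set)"
    by blast
  then show "invariants (Ah_Aut h) Ah_Fx = Ah_emb ` range (\<lambda>c. [:c:])"
    by (rule Ah_Fx_invariants_power_of_linear)
next
  assume "Ah_tauP h = (\<lambda>\<nu>. Ah_tau h 1 \<nu>) ` Ah_G h"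
  then show "invariants (Ah_Aut h) Ah_Fx = Ah_emb ` range (\<lambda>p. pcompose p (\<Prod>\<nu>\<in>Ah_G h. [:\<nu>, 1:]))"
    by (rule Ah_Fx_invariants_translations[OF assms])
next
  fix \<alpha> \<beta> and l :: nat
  assume "l > 1 \<and> (\<alpha>, \<beta>) \<in> Ah_P h \<and> \<alpha> ^ l = 1 \<and> (\<forall>k. 0 < k \<and> k < l \<longrightarrow> \<alpha> ^ k \<noteq> 1)
    \<and> Ah_tauP h = {Ah_tau h 1 \<nu> \<circ> (Ah_tau h \<alpha> \<beta> ^^ k) | \<nu> k. \<nu> \<in> Ah_G h}"
  then show "invariants (Ah_Aut h) Ah_Fx
    = Ah_emb ` range (\<lambda>p. pcompose p (\<Prod>\<nu>\<in>Ah_G h. [:\<beta> / (\<alpha> - 1) + \<nu>, 1:] ^ l))"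
    by (elim conjE) (rule Ah_Fx_invariants_translations_root_of_unity[OF assms])
qed

end
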